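(* Identify $\mathcal M_d(\mathbb C)\otimes\mathcal M_m(\mathbb C)$ with $\mathcal M_{dm}(\mathbb C)$ via $A\otimes B\mapsto(b_{ij}A)_{i,j=1}^m$, and define the partial trace $\mathrm{Tr}_m:\mathcal M_{dm}(\mathbb C)\to\mathcal M_d(\mathbb C)$ by $\mathrm{Tr}_m(C)=\sum_{i=1}^m C_{ii}$, where $C=(C_{ij})_{i,j=1}^m$ with $C_{ij}\in\mathcal M_d(\mathbb C)$. (1) If $S\in\mathcal M_{dm}(\mathbb C)$ is Hermitian, there exists $D_S(d,m)\subseteq\mathbb R^d$ such that $\mathrm{Tr}_m(\mathcal U_{dm}(S))=\{A\in\mathcal M_d(\mathbb C)\text{ Hermitian}:\lambda(A)\in D_S(d,m)\}$. (2) If $S\in\mathcal M_{dm}(\mathbb C)$ is positive semidefinite, there exists $D^w_S(d,m)\subseteq(\mathbb R_{\ge0})^d$ such that $\mathrm{Tr}_m(\mathcal C_{dm}(S))=\{A\in\mathcal M_d(\mathbb C)\text{ positive semidefinite}:\lambda(A)\in D^w_S(d,m)\}$.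
   Context: $\mathcal U_{k}(S)=\{U^*SU:U\in\mathcal M_k(\mathbb C)\text{ unitary}\}$, $\mathcal C_k(S)=\{V^*SV:V\in\mathcal M_k(\mathbb C),\|V\|\le1\}$, and $\mathrm{Tr}_m(\mathcal X)=\{\mathrm{Tr}_m(x):x\in\mathcal X\}$. $\lambda(A)$ is the vector of eigenvalues of Hermitian $A$ in non-increasing order with multiplicity. *)

theory Defs
  imports "Jordan_Normal_Form.Schur_Decomposition" "HOL-Computational_Algebra.Fundamental_Theorem_Algebra"
begin

definition hermitian_mat :: "nat \<Rightarrow> complex mat \<Rightarrow> bool" where
  "hermitian_mat n A \<longleftrightarrow> A \<in> carrier_mat n n \<and> mat_adjoint A = A"

definition psd_mat :: "nat \<Rightarrow> complex mat \<Rightarrow> bool" where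
  "psd_mat n A \<longleftrightarrow> hermitian_mat n A \<and>
     (\<forall>x \<in> carrier_vec n. 0 \<le> Re ((A *\<^sub>v x) \<bullet>c x))"

definition unitary_mat :: "nat \<Rightarrow> complex mat \<Rightarrow> bool" where
  "unitary_mat n U \<longleftrightarrow> U \<in> carrier_mat n n \<and> mat_adjoint U * U = 1\<^sub>m n"

(* operator norm (w.r.t. the Euclidean norm) at most 1: \<parallel>V x\<parallel>^2 \<le> \<parallel>x\<parallel>^2 *)
definition contraction_mat :: "nat \<Rightarrow> complex mat \<Rightarrow> bool" where
  "contraction_mat n V \<longleftrightarrow> V \<in> carrier_mat n n \<and>
     (\<forall>x \<in> carrier_vec n. Re ((V *\<^sub>v x) \<bullet>c (V *\<^sub>v x)) \<le> Re (x \<bullet>c x))"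

definition unitary_orbit :: "nat \<Rightarrow> complex mat \<Rightarrow> complex mat set" where
  "unitary_orbit k S = {mat_adjoint U * S * U | U. unitary_mat k U}"

definition contraction_orbit :: "nat \<Rightarrow> complex mat \<Rightarrow> complex mat set" where
  "contraction_orbit k S = {mat_adjoint V * S * V | V. contraction_mat k V}"

(* Partial trace Tr_m : M_{dm} \<rightarrow> M_d, where C = (C_ij)_{i,j<m} with d x d blocks,
   i.e. block (i,j) occupies rows i*d..i*d+d-1, columns j*d..j*d+d-1 (0-based);
   this is the identification A \<otimes> B \<mapsto> (b_ij A). *)
definition partial_trace :: "nat \<Rightarrow> nat \<Rightarrow> complex mat \<Rightarrow> complex mat" where
  "partial_trace d m C = mat d d (\<lambda>(k, l). \<Sum>i<m. C $$ (i * d + k, i * d + l))"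

(* lambda(A): eigenvalues of a Hermitian matrix (roots of the characteristic
   polynomial with multiplicity, which are real), listed in non-increasing order;
   a vector in R^d is represented as a real list of length d. *)
definition eigvals_desc :: "complex mat \<Rightarrow> real list" where
  "eigvals_desc A = rev (sorted_list_of_multiset (image_mset Re (proots (char_poly A))))"

end

theory Submission
  imports Defs
begin

text \<open>
  Conjugating by \<open>W \<otimes> 1\<^sub>m\<close> commutes with the partial trace: it turns \<open>Tr\<^sub>m(X)\<close> into
  \<open>W\<^sup>* Tr\<^sub>m(X) W\<close>. Since \<open>W \<otimes> 1\<^sub>m\<close> is unitary and both \<open>\<U>\<^sub>d\<^sub>m(S)\<close> and \<open>\<C>\<^sub>d\<^sub>m(S)\<close> are stable under
  replacing \<open>V\<close> by \<open>V U\<close> with \<open>U\<close> unitary, the images \<open>Tr\<^sub>m(\<U>\<^sub>d\<^sub>m(S))\<close> and \<open>Tr\<^sub>m(\<C>\<^sub>d\<^sub>m(S))\<close> are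
  invariant under unitary congruence; they consist of Hermitian, respectively positive
  semidefinite, matrices. By the spectral theorem two Hermitian matrices with the same
  eigenvalue list are unitarily congruent, so such an invariant set \<open>X\<close> is exactly the set of
  Hermitian (positive semidefinite) matrices \<open>A\<close> with \<open>\<lambda>(A) \<in> \<lambda>(X)\<close>.
\<close>

section \<open>Adjoints\<close>

lemma dim_mat_adjoint[simp]:
  "dim_row (mat_adjoint A) = dim_col A" "dim_col (mat_adjoint A) = dim_row A"
  unfolding mat_adjoint_def by simp_all

lemma mat_adjoint_carrier[simp]: "A \<in> carrier_mat n k \<Longrightarrow> mat_adjoint A \<in> carrier_mat k n"
  unfolding carrier_mat_def by simp

lemma index_mat_adjoint[simp]:
  "i < dim_col A \<Longrightarrow> j < dim_row A \<Longrightarrow> mat_adjoint (A :: complex mat) $$ (i, j) = cnj (A $$ (j, i))"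
  unfolding mat_adjoint_def by (simp add: mat_of_rows_def)

lemma index_mult_mat_sum:
  "i < dim_row A \<Longrightarrow> j < dim_col B \<Longrightarrow> dim_col A = dim_row B \<Longrightarrow>
   (A * B) $$ (i, j) = (\<Sum>k<dim_row B. A $$ (i, k) * B $$ (k, j))"
  by (simp add: scalar_prod_def atLeast0LessThan)

lemma index_mult_mat_vec_sum:
  "i < dim_row A \<Longrightarrow> dim_col A = dim_vec v \<Longrightarrow> (A *\<^sub>v v) $ i = (\<Sum>k<dim_vec v. A $$ (i, k) * v $ k)"
  by (simp add: scalar_prod_def atLeast0LessThan)

lemma cscalar_prod_sum:
  "dim_vec x = dim_vec y \<Longrightarrow> x \<bullet>c (y :: complex vec) = (\<Sum>i<dim_vec y. x $ i * cnj (y $ i))"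
  by (simp add: scalar_prod_def atLeast0LessThan)

lemma index_congruence_mat:
  assumes "A \<in> carrier_mat n a" "X \<in> carrier_mat n n'" "B \<in> carrier_mat n' b" "i < a" "j < b"
  shows "(mat_adjoint A * X * B) $$ (i, j) =
    (\<Sum>c<n'. \<Sum>r<n. cnj (A $$ (r, i)) * X $$ (r, c) * B $$ (c, j))"
  using assms by (simp add: index_mult_mat_sum sum_distrib_right del: index_mult_mat(1))

lemma mat_adjoint_mult:
  assumes "A \<in> carrier_mat n k" "B \<in> carrier_mat k l"
  shows "mat_adjoint ((A :: complex mat) * B) = mat_adjoint B * mat_adjoint A"
proof (rule eq_matI)
  fix i j assume "i < dim_row (mat_adjoint B * mat_adjoint A)" "j < dim_col (mat_adjoint B * mat_adjoint A)"
  with assms have "i < l" "j < n" by auto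
  with assms show "mat_adjoint (A * B) $$ (i, j) = (mat_adjoint B * mat_adjoint A) $$ (i, j)"
    by (simp add: index_mult_mat_sum mult.commute del: index_mult_mat(1))
qed (use assms in auto)

lemma mat_adjoint_adjoint[simp]: "mat_adjoint (mat_adjoint (A :: complex mat)) = A"
  by (rule eq_matI) simp_all

lemma mat_adjoint_one[simp]: "mat_adjoint (1\<^sub>m n :: complex mat) = 1\<^sub>m n"
  by (rule eq_matI) simp_all

lemma mat_adjoint_zero[simp]: "mat_adjoint (0\<^sub>m n k :: complex mat) = 0\<^sub>m k n"
  by (rule eq_matI) simp_all

lemma mat_adjoint_four_block_mat:
  assumes "A \<in> carrier_mat n1 k1" "B \<in> carrier_mat n1 k2" "C \<in> carrier_mat n2 k1" "D \<in> carrier_mat n2 k2"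
  shows "mat_adjoint (four_block_mat A B C (D :: complex mat)) =
    four_block_mat (mat_adjoint A) (mat_adjoint C) (mat_adjoint B) (mat_adjoint D)"
  by (rule eq_matI) (use assms in auto)

lemma cscalar_prod_mat_adjoint:
  assumes "A \<in> carrier_mat n k" "x \<in> carrier_vec k" "y \<in> carrier_vec n"
  shows "(A *\<^sub>v x) \<bullet>c y = x \<bullet>c (mat_adjoint (A :: complex mat) *\<^sub>v y)"
proof -
  have "(A *\<^sub>v x) \<bullet>c y = (\<Sum>i<n. \<Sum>r<k. A $$ (i, r) * x $ r * cnj (y $ i))"
    using assms by (simp add: cscalar_prod_sum index_mult_mat_vec_sum sum_distrib_right del: index_mult_mat_vec)
  also have "\<dots> = (\<Sum>r<k. \<Sum>i<n. A $$ (i, r) * x $ r * cnj (y $ i))"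
    by (rule sum.swap)
  also have "\<dots> = x \<bullet>c (mat_adjoint A *\<^sub>v y)"
    using assms by (simp add: cscalar_prod_sum index_mult_mat_vec_sum sum_distrib_left mult_ac del: index_mult_mat_vec)
  finally show ?thesis .
qed

lemma congruence_mat_carrier:
  "V \<in> carrier_mat n k \<Longrightarrow> S \<in> carrier_mat n n \<Longrightarrow> mat_adjoint V * S * V \<in> carrier_mat k k"
  by (metis mat_adjoint_carrier mult_carrier_mat)

lemma mat_adjoint_mult_congruence:
  fixes S U K :: "complex mat"
  assumes "S \<in> carrier_mat n n" "U \<in> carrier_mat n n" "K \<in> carrier_mat n n"
  shows "mat_adjoint (U * K) * S * (U * K) = mat_adjoint K * (mat_adjoint U * S * U) * K"
  using assms by (simp add: mat_adjoint_mult[OF assms(2,3)] assoc_mult_mat[of _ n n _ n _ n] mult_carrier_mat[of _ n n])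

section \<open>Unitary, Hermitian and positive semidefinite matrices\<close>

lemma unitary_mat_carrier: "unitary_mat n U \<Longrightarrow> U \<in> carrier_mat n n"
  unfolding unitary_mat_def by simp

lemma unitary_mat_mult_adjoint: "unitary_mat n U \<Longrightarrow> U * mat_adjoint U = 1\<^sub>m n"
  unfolding unitary_mat_def by (metis mat_adjoint_carrier mat_mult_left_right_inverse)

lemma unitary_mat_adjoint: "unitary_mat n U \<Longrightarrow> unitary_mat n (mat_adjoint U)"
  using unitary_mat_mult_adjoint unfolding unitary_mat_def by auto

lemma unitary_mat_mult:
  assumes "unitary_mat n U" "unitary_mat n V"
  shows "unitary_mat n (U * V)"
proof -
  have U: "U \<in> carrier_mat n n" and V: "V \<in> carrier_mat n n"
    using assms by (simp_all add: unitary_mat_carrier)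
  have "mat_adjoint (U * V) * (U * V) = mat_adjoint V * 1\<^sub>m n * V"
    using mat_adjoint_mult_congruence[OF one_carrier_mat U V] assms U by (simp add: unitary_mat_def)
  then show ?thesis
    using assms U V unfolding unitary_mat_def by simp
qed

lemma unitary_mat_cols_orthonormal:
  assumes "unitary_mat n U" "i < n" "j < n"
  shows "col U j \<bullet>c col U i = (if i = j then 1 else 0)"
proof -
  have U: "U \<in> carrier_mat n n" using assms(1) by (rule unitary_mat_carrier)
  have "col U j \<bullet>c col U i = (mat_adjoint U * U) $$ (i, j)"
    using U assms(2,3) by (simp add: cscalar_prod_sum index_mult_mat_sum mult.commute del: index_mult_mat(1))
  then show ?thesis
    using assms unfolding unitary_mat_def by simp
qed

lemma unitary_mat_of_orthonormal_cols:
  assumes "length ws = n" "set ws \<subseteq> carrier_vec n"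
    and "\<And>i j. i < n \<Longrightarrow> j < n \<Longrightarrow> ws ! j \<bullet>c ws ! i = (if i = j then 1 else 0)"
  shows "unitary_mat n (mat_of_cols n ws)"
proof -
  let ?U = "mat_of_cols n ws"
  have U: "?U \<in> carrier_mat n n" using assms(1) by auto
  have "mat_adjoint ?U * ?U = 1\<^sub>m n"
  proof (rule eq_matI)
    fix i j assume "i < dim_row (1\<^sub>m n :: complex mat)" "j < dim_col (1\<^sub>m n :: complex mat)"
    then have ij: "i < n" "j < n" by auto
    moreover have "ws ! i \<in> carrier_vec n" "ws ! j \<in> carrier_vec n"
      using ij assms(1,2) by auto
    ultimately have "(mat_adjoint ?U * ?U) $$ (i, j) = ws ! j \<bullet>c ws ! i"
      using U assms(1)
      by (simp add: index_mult_mat_sum cscalar_prod_sum mat_of_cols_index mult.commute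
          del: index_mult_mat(1))
    then show "(mat_adjoint ?U * ?U) $$ (i, j) = 1\<^sub>m n $$ (i, j)"
      using assms(3) ij by simp
  qed (use U in auto)
  then show ?thesis
    using U unfolding unitary_mat_def by simp
qed

lemma hermitian_mat_carrier: "hermitian_mat n A \<Longrightarrow> A \<in> carrier_mat n n"
  unfolding hermitian_mat_def by simp

lemma hermitian_mat_index:
  "hermitian_mat n A \<Longrightarrow> i < n \<Longrightarrow> j < n \<Longrightarrow> A $$ (i, j) = cnj (A $$ (j, i))"
  unfolding hermitian_mat_def by (metis index_mat_adjoint carrier_matD)

lemma hermitian_matI:
  assumes "A \<in> carrier_mat n n" "\<And>i j. i < n \<Longrightarrow> j < n \<Longrightarrow> A $$ (i, j) = cnj (A $$ (j, i))"
  shows "hermitian_mat n A"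
  unfolding hermitian_mat_def
proof
  show "mat_adjoint A = A"
  proof (rule eq_matI)
    fix i j assume "i < dim_row A" "j < dim_col A"
    then show "mat_adjoint A $$ (i, j) = A $$ (i, j)"
      using assms(1) assms(2)[of i j] by simp
  qed (use assms(1) in simp_all)
qed (fact assms(1))

lemma psd_mat_hermitian_mat: "psd_mat n A \<Longrightarrow> hermitian_mat n A"
  unfolding psd_mat_def by simp

lemma hermitian_mat_congruence:
  fixes S V :: "complex mat"
  assumes "hermitian_mat n S" "V \<in> carrier_mat n k"
  shows "hermitian_mat k (mat_adjoint V * S * V)"
proof -
  have S: "S \<in> carrier_mat n n" and SS: "mat_adjoint S = S"
    using assms(1) unfolding hermitian_mat_def by auto
  have VS: "mat_adjoint V * S \<in> carrier_mat k n"
    using S assms(2) by (metis mat_adjoint_carrier mult_carrier_mat)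
  have "mat_adjoint (mat_adjoint V * S * V) = mat_adjoint V * mat_adjoint (mat_adjoint V * S)"
    by (rule mat_adjoint_mult[OF VS assms(2)])
  also have "\<dots> = mat_adjoint V * (S * V)"
    using mat_adjoint_mult[OF mat_adjoint_carrier[OF assms(2)] S] SS by simp
  also have "\<dots> = mat_adjoint V * S * V"
    using S assms(2) by (simp add: assoc_mult_mat[of _ k n _ n _ k])
  finally show ?thesis
    using assms(2) S unfolding hermitian_mat_def by auto
qed

lemma psd_mat_congruence:
  fixes S V :: "complex mat"
  assumes "psd_mat n S" "V \<in> carrier_mat n k"
  shows "psd_mat k (mat_adjoint V * S * V)"
  unfolding psd_mat_def
proof (intro conjI ballI)
  have S: "S \<in> carrier_mat n n"
    using assms(1) unfolding psd_mat_def hermitian_mat_def by simp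
  show "hermitian_mat k (mat_adjoint V * S * V)"
    using assms psd_mat_def hermitian_mat_congruence by blast
  fix x :: "complex vec" assume x: "x \<in> carrier_vec k"
  have VS: "mat_adjoint V * S \<in> carrier_mat k n"
    using S assms(2) by (metis mat_adjoint_carrier mult_carrier_mat)
  have "(mat_adjoint V * S * V) *\<^sub>v x = (mat_adjoint V * S) *\<^sub>v (V *\<^sub>v x)"
    by (rule assoc_mult_mat_vec[OF VS assms(2) x])
  also have "\<dots> = mat_adjoint V *\<^sub>v (S *\<^sub>v (V *\<^sub>v x))"
    using S assms(2) x by (simp add: assoc_mult_mat_vec[of _ k n _ n])
  finally have "(mat_adjoint V * S * V) *\<^sub>v x = mat_adjoint V *\<^sub>v (S *\<^sub>v (V *\<^sub>v x))" .
  then have "((mat_adjoint V * S * V) *\<^sub>v x) \<bullet>c x = (S *\<^sub>v (V *\<^sub>v x)) \<bullet>c (V *\<^sub>v x)"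
    using S assms(2) x by (simp add: cscalar_prod_mat_adjoint[of "mat_adjoint V" k n])
  then show "0 \<le> Re (((mat_adjoint V * S * V) *\<^sub>v x) \<bullet>c x)"
    using assms x unfolding psd_mat_def by simp
qed

lemma contraction_mat_carrier: "contraction_mat n V \<Longrightarrow> V \<in> carrier_mat n n"
  unfolding contraction_mat_def by simp

lemma contraction_mat_mult_unitary:
  assumes V: "contraction_mat n V" and K: "unitary_mat n K"
  shows "contraction_mat n (V * K)"
  unfolding contraction_mat_def
proof (intro conjI ballI)
  have Vc: "V \<in> carrier_mat n n" using V by (rule contraction_mat_carrier)
  have Kc: "K \<in> carrier_mat n n" using K by (rule unitary_mat_carrier)
  show "V * K \<in> carrier_mat n n" using Vc Kc by simp
  fix x :: "complex vec" assume x: "x \<in> carrier_vec n"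
  have "Re (((V * K) *\<^sub>v x) \<bullet>c ((V * K) *\<^sub>v x)) \<le> Re ((K *\<^sub>v x) \<bullet>c (K *\<^sub>v x))"
    using V Vc Kc x unfolding contraction_mat_def by simp
  also have "(K *\<^sub>v x) \<bullet>c (K *\<^sub>v x) = x \<bullet>c ((mat_adjoint K * K) *\<^sub>v x)"
    using Kc x by (simp add: cscalar_prod_mat_adjoint[OF Kc] assoc_mult_mat_vec[of _ n n _ n])
  also have "\<dots> = x \<bullet>c x"
    using K x unfolding unitary_mat_def by simp
  finally show "Re (((V * K) *\<^sub>v x) \<bullet>c ((V * K) *\<^sub>v x)) \<le> Re (x \<bullet>c x)" .
qed

section \<open>The spectral theorem\<close>

definition cnormalize :: "complex vec \<Rightarrow> complex vec" where
  "cnormalize w = (1 / complex_of_real (sqrt (Re (w \<bullet>c w)))) \<cdot>\<^sub>v w"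

lemma cnormalize_carrier[simp]: "w \<in> carrier_vec n \<Longrightarrow> cnormalize w \<in> carrier_vec n"
  unfolding cnormalize_def by simp

lemma cscalar_prod_smult:
  "dim_vec x = dim_vec y \<Longrightarrow> (a \<cdot>\<^sub>v x) \<bullet>c (b \<cdot>\<^sub>v (y :: complex vec)) = a * cnj b * (x \<bullet>c y)"
  by (simp add: cscalar_prod_sum sum_distrib_left mult_ac)

lemma cscalar_prod_self_real_pos:
  assumes "w \<in> carrier_vec n" "w \<noteq> 0\<^sub>v n"
  obtains r where "w \<bullet>c w = complex_of_real r" "0 < r"
proof
  have "w \<bullet>c w > 0" using assms conjugate_square_greater_0_vec by blast
  then show "w \<bullet>c w = complex_of_real (Re (w \<bullet>c w))" "0 < Re (w \<bullet>c w)"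
    by (simp_all add: less_complex_def complex_eq_iff)
qed

lemma cnormalize_self:
  assumes "w \<in> carrier_vec n" "w \<noteq> 0\<^sub>v n"
  shows "cnormalize w \<bullet>c cnormalize w = 1"
proof -
  obtain r where r: "w \<bullet>c w = complex_of_real r" "0 < r"
    using assms by (rule cscalar_prod_self_real_pos)
  have "cnormalize w \<bullet>c cnormalize w =
      (1 / complex_of_real (sqrt r)) * cnj (1 / complex_of_real (sqrt r)) * complex_of_real r"
    unfolding cnormalize_def using assms(1) r by (subst cscalar_prod_smult) simp_all
  also have "\<dots> = 1"
    using r(2) by (simp add: field_simps flip: of_real_mult)
  finally show ?thesis .
qed

lemma cnormalize_orthogonal:
  "dim_vec v = dim_vec w \<Longrightarrow> v \<bullet>c w = 0 \<Longrightarrow> cnormalize v \<bullet>c cnormalize w = 0"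
  unfolding cnormalize_def by (subst cscalar_prod_smult) simp_all

lemma corthogonal_cnormalize_orthonormal:
  assumes ws: "corthogonal ws" "set ws \<subseteq> carrier_vec n" and ij: "i < length ws" "j < length ws"
  shows "cnormalize (ws ! j) \<bullet>c cnormalize (ws ! i) = (if i = j then 1 else 0)"
proof (cases "i = j")
  case True
  have "ws ! i \<in> carrier_vec n" using ws(2) ij(1) by auto
  moreover then have "ws ! i \<noteq> 0\<^sub>v n"
    using corthogonalD[OF ws(1) ij(1) ij(1)] by auto
  ultimately show ?thesis
    using True cnormalize_self by simp
next
  case False
  have "ws ! j \<bullet>c ws ! i = 0"
    using corthogonalD[OF ws(1) ij(2) ij(1)] False by simp
  moreover have "ws ! j \<in> carrier_vec n" "ws ! i \<in> carrier_vec n"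
    using ws(2) ij by auto
  ultimately show ?thesis
    using False cnormalize_orthogonal[of "ws ! j" "ws ! i"] by simp
qed

lemma unitary_mat_first_col_exists:
  assumes v: "v \<in> carrier_vec n" and v0: "v \<noteq> 0\<^sub>v n"
  obtains U c where "unitary_mat n U" "col U 0 = c \<cdot>\<^sub>v v"
proof -
  interpret cof_vec_space n "TYPE(complex)" .
  define b where "b = basis_completion v"
  define ws where "ws = gram_schmidt n b"
  from basis_completion[OF v v0, folded b_def]
  have b: "set b \<subseteq> carrier_vec n" "distinct b" "\<not> lin_dep (set b)" "hd b = v" "length b = n"
    by auto
  have ws: "set ws \<subseteq> carrier_vec n" "corthogonal ws" "length ws = n"
    using gram_schmidt_result[OF b(1-3) ws_def] b(5) by auto
  have n: "0 < n" using v v0 by (cases n) auto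
  then obtain vs where "b = v # vs" using b(4,5) by (cases b) auto
  then have hd_ws: "hd ws = v"
    using gram_schmidt_hd[OF v, of vs] unfolding ws_def by simp
  define us where "us = map cnormalize ws"
  have "unitary_mat n (mat_of_cols n us)"
    using ws corthogonal_cnormalize_orthonormal[OF ws(2,1)] unfolding us_def
    by (intro unitary_mat_of_orthonormal_cols) auto
  moreover have "col (mat_of_cols n us) 0 = us ! 0"
    using n ws(1,3) unfolding us_def by (simp add: col_mat_of_cols subset_code(1))
  moreover have "us ! 0 = cnormalize v"
    using n ws(3) hd_ws hd_conv_nth[of ws] unfolding us_def by fastforce
  ultimately show ?thesis
    using that unfolding cnormalize_def by metis
qed

lemma index_congruence_mat_cscalar_prod:
  fixes U A :: "complex mat"
  assumes U: "U \<in> carrier_mat n n" and A: "A \<in> carrier_mat n n" and "i < n" "j < n"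
  shows "(mat_adjoint U * A * U) $$ (i, j) = (A *\<^sub>v col U j) \<bullet>c col U i"
proof -
  have "(mat_adjoint U * A * U) $$ (i, j) = (\<Sum>c<n. \<Sum>r<n. cnj (U $$ (r, i)) * A $$ (r, c) * U $$ (c, j))"
    by (rule index_congruence_mat[OF U A U assms(3,4)])
  also have "\<dots> = (\<Sum>r<n. \<Sum>c<n. cnj (U $$ (r, i)) * A $$ (r, c) * U $$ (c, j))"
    by (rule sum.swap)
  also have "\<dots> = (A *\<^sub>v col U j) \<bullet>c col U i"
    using U A assms(3,4)
    by (simp add: cscalar_prod_sum index_mult_mat_vec_sum sum_distrib_right sum_distrib_left mult_ac
        del: index_mult_mat_vec)
  finally show ?thesis .
qed

lemma unitary_congruence_eigenvector_col:
  assumes U: "unitary_mat n U" and A: "A \<in> carrier_mat n n"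
    and ev: "A *\<^sub>v col U j = e \<cdot>\<^sub>v col U j" and ij: "i < n" "j < n"
  shows "(mat_adjoint U * A * U) $$ (i, j) = (if i = j then e else 0)"
proof -
  have Uc: "U \<in> carrier_mat n n" using U by (rule unitary_mat_carrier)
  have "(mat_adjoint U * A * U) $$ (i, j) = e * (col U j \<bullet>c col U i)"
    using index_congruence_mat_cscalar_prod[OF Uc A ij] ev Uc ij by simp
  then show ?thesis
    using unitary_mat_cols_orthonormal[OF U ij] by simp
qed

lemma char_poly_unitary_congruence:
  assumes U: "unitary_mat n U" and A: "A \<in> carrier_mat n n"
  shows "char_poly (mat_adjoint U * A * U) = char_poly A"
proof -
  have Uc: "U \<in> carrier_mat n n" using U by (rule unitary_mat_carrier)
  have "U * (mat_adjoint U * A * U) * mat_adjoint U = (U * mat_adjoint U) * A * (U * mat_adjoint U)"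
    using Uc A by (simp add: assoc_mult_mat[of _ n n _ n _ n] mult_carrier_mat[of _ n n])
  then have "similar_mat_wit A (mat_adjoint U * A * U) U (mat_adjoint U)"
    using U Uc A unitary_mat_mult_adjoint[OF U] congruence_mat_carrier[OF Uc A]
    by (intro similar_mat_witI[of _ _ n]) (simp_all add: unitary_mat_def)
  then show ?thesis
    using char_poly_similar unfolding similar_mat_def by metis
qed

definition diag_list_mat :: "nat \<Rightarrow> complex list \<Rightarrow> complex mat" where
  "diag_list_mat n es = mat n n (\<lambda>(i, j). if i = j then es ! i else 0)"

lemma diag_list_mat_Cons:
  "diag_list_mat (Suc n) (e # es) =
    four_block_mat (mat 1 1 (\<lambda>_. e)) (0\<^sub>m 1 n) (0\<^sub>m n 1) (diag_list_mat n es)"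
  by (rule eq_matI) (auto simp: diag_list_mat_def)

lemma hermitian_mat_eigen_first_col:
  assumes A: "hermitian_mat (Suc n) A" and col0: "\<And>i. i < Suc n \<Longrightarrow> A $$ (i, 0) = (if i = 0 then e else 0)"
  defines "A' \<equiv> mat n n (\<lambda>(i, j). A $$ (Suc i, Suc j))"
  shows "A = four_block_mat (mat 1 1 (\<lambda>_. e)) (0\<^sub>m 1 n) (0\<^sub>m n 1) A'" and "hermitian_mat n A'"
proof -
  have row0: "A $$ (0, j) = (if j = 0 then e else 0)" if "j < Suc n" for j
  proof -
    have "A $$ (0, j) = cnj (if j = 0 then e else 0)"
      using hermitian_mat_index[OF A _ that, of 0] col0[OF that] by simp
    moreover have "cnj e = e"
      using hermitian_mat_index[OF A, of 0 0] col0[of 0] by simp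
    ultimately show ?thesis by simp
  qed
  show "A = four_block_mat (mat 1 1 (\<lambda>_. e)) (0\<^sub>m 1 n) (0\<^sub>m n 1) A'"
  proof (rule eq_matI)
    fix i j assume "i < dim_row (four_block_mat (mat 1 1 (\<lambda>_. e)) (0\<^sub>m 1 n) (0\<^sub>m n 1) A')"
      "j < dim_col (four_block_mat (mat 1 1 (\<lambda>_. e)) (0\<^sub>m 1 n) (0\<^sub>m n 1) A')"
    then have "i < Suc n" "j < Suc n" unfolding A'_def by auto
    then show "A $$ (i, j) = four_block_mat (mat 1 1 (\<lambda>_. e)) (0\<^sub>m 1 n) (0\<^sub>m n 1) A' $$ (i, j)"
      using row0 col0 unfolding A'_def by (cases i; cases j) auto
  qed (use hermitian_mat_carrier[OF A] in \<open>auto simp: A'_def\<close>)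
  show "hermitian_mat n A'"
  proof (rule hermitian_matI)
    fix i j assume "i < n" "j < n"
    then show "A' $$ (i, j) = cnj (A' $$ (j, i))"
      using hermitian_mat_index[OF A, of "Suc i" "Suc j"] unfolding A'_def by simp
  qed (simp add: A'_def)
qed

lemma congruence_four_block_one:
  fixes A B U :: "complex mat"
  assumes B: "B \<in> carrier_mat 1 1" and A: "A \<in> carrier_mat n n" and U: "U \<in> carrier_mat n n"
  defines "V \<equiv> four_block_mat (1\<^sub>m 1) (0\<^sub>m 1 n) (0\<^sub>m n 1) U"
  shows "mat_adjoint V * four_block_mat B (0\<^sub>m 1 n) (0\<^sub>m n 1) A * V =
    four_block_mat B (0\<^sub>m 1 n) (0\<^sub>m n 1) (mat_adjoint U * A * U)"
proof -
  have "mat_adjoint V = four_block_mat (1\<^sub>m 1) (0\<^sub>m 1 n) (0\<^sub>m n 1) (mat_adjoint U)"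
    unfolding V_def by (subst mat_adjoint_four_block_mat[of _ 1 1 _ n _ n]) (use U in simp_all)
  also have "\<dots> * four_block_mat B (0\<^sub>m 1 n) (0\<^sub>m n 1) A =
      four_block_mat B (0\<^sub>m 1 n) (0\<^sub>m n 1) (mat_adjoint U * A)"
    using mult_carrier_mat[OF mat_adjoint_carrier[OF U] A]
    by (subst mult_four_block_mat[of _ 1 1 _ n _ n _ _ 1 _ n]) (use B A U in simp_all)
  also have "\<dots> * V = four_block_mat B (0\<^sub>m 1 n) (0\<^sub>m n 1) (mat_adjoint U * A * U)"
    unfolding V_def using mult_carrier_mat[OF mat_adjoint_carrier[OF U] A] congruence_mat_carrier[OF U A]
    by (subst mult_four_block_mat[of _ 1 1 _ n _ n _ _ 1 _ n]) (use B A U in simp_all)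
  finally show ?thesis .
qed

lemma unitary_mat_four_block_one:
  assumes "unitary_mat n U"
  shows "unitary_mat (Suc n) (four_block_mat (1\<^sub>m 1) (0\<^sub>m 1 n) (0\<^sub>m n 1) U)"
proof -
  define V where "V = four_block_mat (1\<^sub>m 1) (0\<^sub>m 1 n) (0\<^sub>m n 1) U"
  have U: "U \<in> carrier_mat n n" using assms by (rule unitary_mat_carrier)
  then have V: "V \<in> carrier_mat (Suc n) (Suc n)"
    using four_block_carrier_mat[OF one_carrier_mat[of 1] U, where B = "0\<^sub>m 1 n" and C = "0\<^sub>m n 1"]
    unfolding V_def by simp
  have "mat_adjoint V * V = mat_adjoint V * 1\<^sub>m (Suc n) * V"
    using V by simp
  also have "\<dots> = 1\<^sub>m (Suc n)"
    using congruence_four_block_one[OF one_carrier_mat one_carrier_mat U] four_block_one_mat[of 1 n]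
      assms U unfolding unitary_mat_def V_def by simp
  finally show ?thesis
    using V unfolding unitary_mat_def V_def by simp
qed

lemma hermitian_mat_deflate_eigenvalue:
  assumes A: "hermitian_mat n A" and e: "eigenvalue A e"
  obtains n' U B where "n = Suc n'" "unitary_mat n U" "hermitian_mat n' B"
    "mat_adjoint U * A * U = four_block_mat (mat 1 1 (\<lambda>_. e)) (0\<^sub>m 1 n') (0\<^sub>m n' 1) B"
proof -
  have Ac: "A \<in> carrier_mat n n" using A by (rule hermitian_mat_carrier)
  obtain v where v: "v \<in> carrier_vec n" "v \<noteq> 0\<^sub>v n" "A *\<^sub>v v = e \<cdot>\<^sub>v v"
    using e Ac unfolding eigenvalue_def eigenvector_def by auto
  then obtain n' where n: "n = Suc n'" by (cases n) auto
  obtain U c where U: "unitary_mat n U" and col0: "col U 0 = c \<cdot>\<^sub>v v"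
    using unitary_mat_first_col_exists[OF v(1,2)] .
  have "A *\<^sub>v col U 0 = e \<cdot>\<^sub>v col U 0"
    unfolding col0 using Ac v by (simp add: mult_mat_vec[OF Ac v(1)] smult_smult_assoc mult.commute)
  then have "(mat_adjoint U * A * U) $$ (i, 0) = (if i = 0 then e else 0)" if "i < Suc n'" for i
    using unitary_congruence_eigenvector_col[OF U Ac _ that[folded n]] n by simp
  moreover have "hermitian_mat (Suc n') (mat_adjoint U * A * U)"
    using hermitian_mat_congruence[OF A unitary_mat_carrier[OF U]] unfolding n .
  ultimately show ?thesis
    using that[OF n U] hermitian_mat_eigen_first_col by metis
qed

theorem hermitian_mat_unitary_diagonalization:
  assumes "hermitian_mat n A" "char_poly A = (\<Prod>a\<leftarrow>es. [:- a, 1:])"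
  shows "\<exists>U. unitary_mat n U \<and> mat_adjoint U * A * U = diag_list_mat n es"
  using assms
proof (induction es arbitrary: n A)
  case Nil
  then have A: "A \<in> carrier_mat n n" by (simp add: hermitian_mat_carrier)
  then have "n = 0" using degree_monic_char_poly[OF A] Nil.prems(2) by simp
  then have "mat_adjoint (1\<^sub>m n) * A * 1\<^sub>m n = diag_list_mat n []"
    using A by (intro eq_matI) (simp_all add: diag_list_mat_def)
  then show ?case
    by (metis mat_adjoint_one left_mult_one_mat one_carrier_mat unitary_mat_def)
next
  case (Cons e es n A)
  have A: "A \<in> carrier_mat n n" using Cons.prems(1) by (rule hermitian_mat_carrier)
  have "eigenvalue A e"
    using eigenvalue_root_char_poly[OF A] Cons.prems(2) by simp
  then obtain n' U1 B where n: "n = Suc n'" and U1: "unitary_mat n U1" and hB: "hermitian_mat n' B"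
    and B_block: "mat_adjoint U1 * A * U1 = four_block_mat (mat 1 1 (\<lambda>_. e)) (0\<^sub>m 1 n') (0\<^sub>m n' 1) B"
    using hermitian_mat_deflate_eigenvalue[OF Cons.prems(1)] by metis
  have B: "B \<in> carrier_mat n' n'" using hB by (rule hermitian_mat_carrier)
  have "[:- e, 1:] * char_poly B = char_poly (mat_adjoint U1 * A * U1)"
    unfolding B_block
    by (subst char_poly_four_block_zeros_col) (simp_all add: B char_poly_defs det_def sign_def)
  also have "\<dots> = [:- e, 1:] * (\<Prod>a\<leftarrow>es. [:- a, 1:])"
    using char_poly_unitary_congruence[OF U1 A] Cons.prems(2) by simp
  finally have "char_poly B = (\<Prod>a\<leftarrow>es. [:- a, 1:])"
    by (metis mult_cancel_left pCons_eq_0_iff zero_neq_one)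
  then obtain U3 where U3: "unitary_mat n' U3" and U3_diag: "mat_adjoint U3 * B * U3 = diag_list_mat n' es"
    using Cons.IH[OF hB] by blast
  define U2 where "U2 = four_block_mat (1\<^sub>m 1) (0\<^sub>m 1 n') (0\<^sub>m n' 1) U3"
  have U2: "unitary_mat n U2"
    unfolding U2_def n by (rule unitary_mat_four_block_one[OF U3])
  have "mat_adjoint (U1 * U2) * A * (U1 * U2) = mat_adjoint U2 * (mat_adjoint U1 * A * U1) * U2"
    by (rule mat_adjoint_mult_congruence[OF A unitary_mat_carrier[OF U1] unitary_mat_carrier[OF U2]])
  also have "\<dots> = diag_list_mat n (e # es)"
    unfolding B_block U2_def n diag_list_mat_Cons U3_diag[symmetric]
    by (rule congruence_four_block_one[OF _ B unitary_mat_carrier[OF U3]]) simp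
  finally show ?case
    using unitary_mat_mult[OF U1 U2] by blast
qed

section \<open>Eigenvalue lists of Hermitian matrices\<close>

lemma eigenvalue_cscalar_prod:
  assumes A: "A \<in> carrier_mat n n" and e: "eigenvalue A e"
  obtains v r where "v \<in> carrier_vec n" "0 < r"
    "(A *\<^sub>v v) \<bullet>c v = e * complex_of_real r" "v \<bullet>c (A *\<^sub>v v) = cnj e * complex_of_real r"
proof -
  obtain v where v: "v \<in> carrier_vec n" "v \<noteq> 0\<^sub>v n" "A *\<^sub>v v = e \<cdot>\<^sub>v v"
    using e A unfolding eigenvalue_def eigenvector_def by auto
  obtain r where r: "v \<bullet>c v = complex_of_real r" "0 < r"
    using v(1,2) by (rule cscalar_prod_self_real_pos)
  have "(A *\<^sub>v v) \<bullet>c v = e * (v \<bullet>c v)" "v \<bullet>c (A *\<^sub>v v) = cnj e * (v \<bullet>c v)"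
    unfolding v(3) using v(1) by (simp_all add: cscalar_prod_sum sum_distrib_left mult_ac)
  with that v r show ?thesis by simp
qed

lemma hermitian_mat_eigenvalue_real:
  assumes A: "hermitian_mat n A" and e: "eigenvalue A e"
  shows "complex_of_real (Re e) = e"
proof -
  have Ac: "A \<in> carrier_mat n n" using A by (rule hermitian_mat_carrier)
  obtain v r where v: "v \<in> carrier_vec n" "0 < r"
    "(A *\<^sub>v v) \<bullet>c v = e * complex_of_real r" "v \<bullet>c (A *\<^sub>v v) = cnj e * complex_of_real r"
    using Ac e by (rule eigenvalue_cscalar_prod)
  have "(A *\<^sub>v v) \<bullet>c v = v \<bullet>c (A *\<^sub>v v)"
    using cscalar_prod_mat_adjoint[OF Ac v(1) v(1)] A unfolding hermitian_mat_def by simp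
  then have "e * complex_of_real r = cnj e * complex_of_real r"
    using v(3,4) by simp
  then have "cnj e = e"
    using v(2) by simp
  then show ?thesis
    by (simp add: complex_eq_iff)
qed

lemma psd_mat_eigenvalue_nonneg:
  assumes A: "psd_mat n A" and e: "eigenvalue A e"
  shows "0 \<le> Re e"
proof -
  have Ac: "A \<in> carrier_mat n n"
    using A unfolding psd_mat_def by (simp add: hermitian_mat_carrier)
  obtain v r where v: "v \<in> carrier_vec n" "0 < r" "(A *\<^sub>v v) \<bullet>c v = e * complex_of_real r"
    using Ac e by (rule eigenvalue_cscalar_prod)
  moreover have "0 \<le> Re ((A *\<^sub>v v) \<bullet>c v)"
    using A v(1) unfolding psd_mat_def by blast
  ultimately have "0 \<le> Re e * r"
    by simp
  then show ?thesis
    using v(2) by (simp add: zero_le_mult_iff)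
qed

lemma proots_prod_list_linear: "proots (\<Prod>a\<leftarrow>as. [:- a, 1 :: complex:]) = mset as"
proof (induction as)
  case (Cons a as)
  have "(\<Prod>a\<leftarrow>as. [:- a, 1 :: complex:]) \<noteq> 0"
    by (auto simp: prod_list_zero_iff)
  with Cons.IH show ?case
    by (simp add: proots_mult del: mult_pCons_left)
qed simp

lemma prod_list_map_mset_eq:
  "mset xs = mset ys \<Longrightarrow> (\<Prod>x\<leftarrow>xs. f x) = (\<Prod>y\<leftarrow>ys. (f y :: 'b :: comm_monoid_mult))"
  by (metis mset_map prod_mset_prod_list)

lemma eigvals_desc_hermitian_mat:
  assumes A: "hermitian_mat n A"
  shows "length (eigvals_desc A) = n"
    and "char_poly A = (\<Prod>a\<leftarrow>map complex_of_real (eigvals_desc A). [:- a, 1:])"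
    and "t \<in> set (eigvals_desc A) \<Longrightarrow> eigenvalue A (complex_of_real t)"
proof -
  have Ac: "A \<in> carrier_mat n n" using A by (rule hermitian_mat_carrier)
  obtain as where cp: "char_poly A = (\<Prod>a\<leftarrow>as. [:- a, 1:])" and len: "length as = n"
    using char_poly_factorized[OF Ac] by blast
  have eig: "eigenvalue A a" if "a \<in> set as" for a
    using eigenvalue_root_char_poly[OF Ac] that unfolding cp by (simp add: poly_prod_list_zero_iff)
  have ms: "mset (eigvals_desc A) = image_mset Re (mset as)"
    unfolding eigvals_desc_def cp proots_prod_list_linear by simp
  have "mset (map complex_of_real (eigvals_desc A)) = image_mset (\<lambda>a. complex_of_real (Re a)) (mset as)"
    using ms by (simp add: image_mset.compositionality o_def)
  also have "\<dots> = image_mset id (mset as)"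
    using hermitian_mat_eigenvalue_real[OF A eig] by (intro image_mset_cong) simp
  finally have ms_as: "mset (map complex_of_real (eigvals_desc A)) = mset as"
    by simp
  show "length (eigvals_desc A) = n"
    using arg_cong[OF ms_as, of size] len by simp
  show "char_poly A = (\<Prod>a\<leftarrow>map complex_of_real (eigvals_desc A). [:- a, 1:])"
    unfolding cp by (rule prod_list_map_mset_eq[OF ms_as[symmetric]])
  assume "t \<in> set (eigvals_desc A)"
  moreover have "set (map complex_of_real (eigvals_desc A)) = set as"
    using arg_cong[OF ms_as, of set_mset] by simp
  ultimately have "complex_of_real t \<in> set as"
    by auto
  then show "eigenvalue A (complex_of_real t)" by (rule eig)
qed

lemma unitarily_congruent_if_eigvals_desc_eq:
  assumes A: "hermitian_mat n A" and B: "hermitian_mat n B" and eq: "eigvals_desc A = eigvals_desc B"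
  shows "\<exists>W. unitary_mat n W \<and> A = mat_adjoint W * B * W"
proof -
  have Ac: "A \<in> carrier_mat n n" and Bc: "B \<in> carrier_mat n n"
    using A B by (simp_all add: hermitian_mat_carrier)
  let ?D = "diag_list_mat n (map complex_of_real (eigvals_desc A))"
  obtain UA where UA: "unitary_mat n UA" and UA_diag: "mat_adjoint UA * A * UA = ?D"
    using hermitian_mat_unitary_diagonalization[OF A eigvals_desc_hermitian_mat(2)[OF A]] by blast
  obtain UB where UB: "unitary_mat n UB" and UB_diag: "mat_adjoint UB * B * UB = ?D"
    using hermitian_mat_unitary_diagonalization[OF B eigvals_desc_hermitian_mat(2)[OF B]] eq by metis
  have UAc: "UA \<in> carrier_mat n n" and UBc: "UB \<in> carrier_mat n n"
    using UA UB by (simp_all add: unitary_mat_carrier)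
  define W where "W = UB * mat_adjoint UA"
  have "mat_adjoint W * B * W = UA * ?D * mat_adjoint UA"
    unfolding W_def mat_adjoint_mult_congruence[OF Bc UBc mat_adjoint_carrier[OF UAc]] UB_diag by simp
  also have "\<dots> = (UA * mat_adjoint UA) * A * (UA * mat_adjoint UA)"
    unfolding UA_diag[symmetric] using UAc Ac
    by (simp add: assoc_mult_mat[of _ n n _ n _ n] mult_carrier_mat[of _ n n])
  also have "\<dots> = A"
    using unitary_mat_mult_adjoint[OF UA] Ac by simp
  finally show ?thesis
    using unitary_mat_mult[OF UB unitary_mat_adjoint[OF UA]] unfolding W_def by metis
qed

section \<open>Block matrices and the partial trace\<close>

lemma sum_lessThan_add: "(\<Sum>s<n + (d :: nat). f s) = (\<Sum>s<n. f s) + (\<Sum>t<d. f (n + t))"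
  by (induction d) (simp_all add: add.assoc)

lemma sum_lessThan_mult_blocks: "(\<Sum>s<d * m. f s) = (\<Sum>q<m. \<Sum>t<d. f (q * d + t :: nat))"
proof (induction m)
  case (Suc m)
  have "d * Suc m = d * m + d" by simp
  then show ?case
    using Suc sum_lessThan_add[of f "d * m" d] by (simp add: mult.commute add.commute)
qed simp

lemma block_index_less:
  assumes "q < m" "t < d"
  shows "q * d + t < d * (m :: nat)"
proof -
  have "q * d + t < Suc q * d" using assms(2) by simp
  also have "\<dots> \<le> m * d" using assms(1) by (intro mult_le_mono1) simp
  finally show ?thesis by (simp add: mult.commute)
qed

lemma block_index_eq_iff:
  "t < d \<Longrightarrow> t' < d \<Longrightarrow> q * d + t = q' * d + t' \<longleftrightarrow> q = q' \<and> (t :: nat) = t'"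
  by (metis div_mult_self1 mod_mult_self1 div_less mod_less add_0 mult.commute add.commute
      less_nat_zero_code)

lemma block_index_decompose:
  assumes "r < d * (m :: nat)"
  obtains q t where "q < m" "t < d" "r = q * d + t"
proof
  have d: "0 < d" using assms by (cases d) auto
  show "r div d < m" using assms d by (simp add: div_less_iff_less_mult mult.commute)
  show "r mod d < d" using d by simp
  show "r = r div d * d + r mod d" by simp
qed

lemma eq_block_matI:
  assumes "A \<in> carrier_mat (d * m) (d * m)" "B \<in> carrier_mat (d * m) (d * m)"
    and "\<And>q t q' t'. q < m \<Longrightarrow> t < d \<Longrightarrow> q' < m \<Longrightarrow> t' < d \<Longrightarrow>
      A $$ (q * d + t, q' * d + t') = B $$ (q * d + t, q' * d + t')"
  shows "A = B"
proof (rule eq_matI)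
  fix i j assume "i < dim_row B" "j < dim_col B"
  then have "i < d * m" "j < d * m" using assms(2) by auto
  then show "A $$ (i, j) = B $$ (i, j)"
    by (elim block_index_decompose) (simp add: assms(3))
qed (use assms in auto)

lemma if_zero_mult: "(if P then a else 0) * b = (if P then a * b else (0 :: 'a :: mult_zero))"
  by simp

lemma mult_if_zero: "b * (if P then a else 0) = (if P then b * a else (0 :: 'a :: mult_zero))"
  by simp

lemma cnj_if_zero: "cnj (if P then a else 0) = (if P then cnj a else 0)"
  by simp

lemma sum_if_zero: "(\<Sum>x\<in>A. if P then f x else 0) = (if P then (\<Sum>x\<in>A. f x) else 0)"
  by simp

lemmas if_zero_simps = if_zero_mult mult_if_zero cnj_if_zero sum_if_zero

text \<open>Under the identification of the partial trace, \<open>block_diag_mat d m W\<close> is \<open>W \<otimes> 1\<^sub>m\<close>.\<close>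

definition block_diag_mat :: "nat \<Rightarrow> nat \<Rightarrow> complex mat \<Rightarrow> complex mat" where
  "block_diag_mat d m W =
    mat (d * m) (d * m) (\<lambda>(r, c). if r div d = c div d then W $$ (r mod d, c mod d) else 0)"

lemma block_diag_mat_carrier[simp]: "block_diag_mat d m W \<in> carrier_mat (d * m) (d * m)"
  unfolding block_diag_mat_def by simp

lemma dim_block_diag_mat[simp]:
  "dim_row (block_diag_mat d m W) = d * m" "dim_col (block_diag_mat d m W) = d * m"
  unfolding block_diag_mat_def by simp_all

lemma index_block_diag_mat[simp]:
  "q < m \<Longrightarrow> t < d \<Longrightarrow> q' < m \<Longrightarrow> t' < d \<Longrightarrow>
    block_diag_mat d m W $$ (q * d + t, q' * d + t') = (if q = q' then W $$ (t, t') else 0)"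
  unfolding block_diag_mat_def using block_index_less[of q m t d] block_index_less[of q' m t' d] by simp

lemma block_diag_mat_one: "block_diag_mat d m (1\<^sub>m d) = 1\<^sub>m (d * m)"
  by (rule eq_block_matI[of _ d m]) (auto simp: block_index_less block_index_eq_iff)

lemma mat_adjoint_block_diag_mat:
  assumes "W \<in> carrier_mat d d"
  shows "mat_adjoint (block_diag_mat d m W) = block_diag_mat d m (mat_adjoint W)"
  by (rule eq_block_matI[of _ d m]) (use assms in \<open>auto simp: block_index_less\<close>)

lemma block_diag_mat_mult:
  assumes W: "W \<in> carrier_mat d d" and V: "V \<in> carrier_mat d d"
  shows "block_diag_mat d m W * block_diag_mat d m V = block_diag_mat d m (W * V)"
proof (rule eq_block_matI[of _ d m])
  fix q t q' t' assume *: "q < m" "t < d" "q' < m" "t' < d"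
  have "(block_diag_mat d m W * block_diag_mat d m V) $$ (q * d + t, q' * d + t') =
      (\<Sum>p<m. \<Sum>u<d. (if q = p then W $$ (t, u) else 0) * (if p = q' then V $$ (u, t') else 0))"
    using * block_index_less[OF *(1,2)] block_index_less[OF *(3,4)]
    by (simp add: index_mult_mat_sum sum_lessThan_mult_blocks del: index_mult_mat(1))
  also have "\<dots> = (\<Sum>u<d. \<Sum>p<m. (if q = p then W $$ (t, u) else 0) * (if p = q' then V $$ (u, t') else 0))"
    by (rule sum.swap)
  also have "\<dots> = (if q = q' then (\<Sum>u<d. W $$ (t, u) * V $$ (u, t')) else 0)"
    using *(1) by (simp add: if_zero_simps)
  also have "\<dots> = block_diag_mat d m (W * V) $$ (q * d + t, q' * d + t')"
    using * W V by (simp add: index_mult_mat_sum del: index_mult_mat(1))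
  finally show "(block_diag_mat d m W * block_diag_mat d m V) $$ (q * d + t, q' * d + t') =
      block_diag_mat d m (W * V) $$ (q * d + t, q' * d + t')" .
qed (simp_all add: mult_carrier_mat[of _ "d * m" "d * m"])

lemma unitary_mat_block_diag_mat:
  assumes "unitary_mat d W"
  shows "unitary_mat (d * m) (block_diag_mat d m W)"
  using assms unfolding unitary_mat_def
  by (simp add: mat_adjoint_block_diag_mat block_diag_mat_mult block_diag_mat_one)

lemma partial_trace_carrier[simp]: "partial_trace d m C \<in> carrier_mat d d"
  unfolding partial_trace_def by simp

lemma dim_partial_trace[simp]: "dim_row (partial_trace d m C) = d" "dim_col (partial_trace d m C) = d"
  unfolding partial_trace_def by simp_all

lemma index_partial_trace[simp]:
  "k < d \<Longrightarrow> l < d \<Longrightarrow> partial_trace d m C $$ (k, l) = (\<Sum>i<m. C $$ (i * d + k, i * d + l))"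
  unfolding partial_trace_def by simp

lemma partial_trace_block_diag_congruence:
  assumes W: "W \<in> carrier_mat d d" and X: "X \<in> carrier_mat (d * m) (d * m)"
  shows "partial_trace d m (mat_adjoint (block_diag_mat d m W) * X * block_diag_mat d m W) =
    mat_adjoint W * partial_trace d m X * W"
proof (rule eq_matI)
  fix k l assume "k < dim_row (mat_adjoint W * partial_trace d m X * W)"
    "l < dim_col (mat_adjoint W * partial_trace d m X * W)"
  then have kl: "k < d" "l < d" using W by auto
  let ?K = "block_diag_mat d m W"
  have "partial_trace d m (mat_adjoint ?K * X * ?K) $$ (k, l) =
      (\<Sum>i<m. \<Sum>q'<m. \<Sum>t'<d. \<Sum>q<m. \<Sum>t<d.
        cnj (?K $$ (q * d + t, i * d + k)) * X $$ (q * d + t, q' * d + t') * ?K $$ (q' * d + t', i * d + l))"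
    using kl block_index_less
    by (simp add: index_congruence_mat[OF block_diag_mat_carrier X block_diag_mat_carrier] sum_lessThan_mult_blocks
        del: index_mult_mat(1))
  also have "\<dots> = (\<Sum>i<m. \<Sum>t'<d. \<Sum>t<d. cnj (W $$ (t, k)) * X $$ (i * d + t, i * d + t') * W $$ (t', l))"
    using kl by (simp add: if_zero_simps)
  also have "\<dots> = (\<Sum>t'<d. \<Sum>t<d. cnj (W $$ (t, k)) * (\<Sum>i<m. X $$ (i * d + t, i * d + t')) * W $$ (t', l))"
    by (simp add: sum_distrib_left sum_distrib_right sum.swap[of _ "{..<m}"])
  also have "\<dots> = (mat_adjoint W * partial_trace d m X * W) $$ (k, l)"
    using kl W by (simp add: index_congruence_mat[OF W partial_trace_carrier W] del: index_mult_mat(1))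
  finally show "partial_trace d m (mat_adjoint ?K * X * ?K) $$ (k, l) =
      (mat_adjoint W * partial_trace d m X * W) $$ (k, l)" .
qed (use W in auto)

lemma hermitian_mat_partial_trace:
  assumes "hermitian_mat (d * m) X"
  shows "hermitian_mat d (partial_trace d m X)"
proof (rule hermitian_matI)
  fix k l assume kl: "k < d" "l < d"
  have "X $$ (i * d + k, i * d + l) = cnj (X $$ (i * d + l, i * d + k))" if "i < m" for i
    using hermitian_mat_index[OF assms] block_index_less[OF that] kl by blast
  then show "partial_trace d m X $$ (k, l) = cnj (partial_trace d m X $$ (l, k))"
    using kl by simp
qed simp

definition block_vec :: "nat \<Rightarrow> nat \<Rightarrow> nat \<Rightarrow> complex vec \<Rightarrow> complex vec" where
  "block_vec d m i x = vec (d * m) (\<lambda>r. if r div d = i then x $ (r mod d) else 0)"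

lemma block_vec_carrier[simp]: "block_vec d m i x \<in> carrier_vec (d * m)"
  unfolding block_vec_def by simp

lemma index_block_vec[simp]:
  "q < m \<Longrightarrow> t < d \<Longrightarrow> block_vec d m i x $ (q * d + t) = (if q = i then x $ t else 0)"
  unfolding block_vec_def using block_index_less[of q m t d] by simp

lemma quadratic_form_sum:
  "A \<in> carrier_mat n n \<Longrightarrow> x \<in> carrier_vec n \<Longrightarrow>
    (A *\<^sub>v x) \<bullet>c x = (\<Sum>k<n. \<Sum>l<n. A $$ (k, l) * x $ l * cnj (x $ k))"
  by (simp add: cscalar_prod_sum index_mult_mat_vec_sum sum_distrib_right del: index_mult_mat_vec)

lemma partial_trace_quadratic_form:
  assumes X: "X \<in> carrier_mat (d * m) (d * m)" and x: "x \<in> carrier_vec d"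
  shows "(partial_trace d m X *\<^sub>v x) \<bullet>c x = (\<Sum>i<m. (X *\<^sub>v block_vec d m i x) \<bullet>c block_vec d m i x)"
proof -
  have "(partial_trace d m X *\<^sub>v x) \<bullet>c x =
      (\<Sum>k<d. \<Sum>l<d. \<Sum>i<m. X $$ (i * d + k, i * d + l) * x $ l * cnj (x $ k))"
    by (simp add: quadratic_form_sum[OF partial_trace_carrier x] sum_distrib_right)
  also have "\<dots> = (\<Sum>i<m. \<Sum>k<d. \<Sum>l<d. X $$ (i * d + k, i * d + l) * x $ l * cnj (x $ k))"
    by (simp add: sum.swap[of _ "{..<m}"])
  also have "\<dots> = (\<Sum>i<m. (X *\<^sub>v block_vec d m i x) \<bullet>c block_vec d m i x)"
  proof (rule sum.cong[OF refl])
    fix i assume "i \<in> {..<m}"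
    then show "(\<Sum>k<d. \<Sum>l<d. X $$ (i * d + k, i * d + l) * x $ l * cnj (x $ k)) =
        (X *\<^sub>v block_vec d m i x) \<bullet>c block_vec d m i x"
      by (simp add: quadratic_form_sum[OF X block_vec_carrier] sum_lessThan_mult_blocks if_zero_simps)
  qed
  finally show ?thesis .
qed

lemma psd_mat_partial_trace:
  assumes "psd_mat (d * m) X"
  shows "psd_mat d (partial_trace d m X)"
  unfolding psd_mat_def
proof (intro conjI ballI)
  show "hermitian_mat d (partial_trace d m X)"
    using assms unfolding psd_mat_def by (simp add: hermitian_mat_partial_trace)
  have X: "X \<in> carrier_mat (d * m) (d * m)"
    using assms unfolding psd_mat_def by (simp add: hermitian_mat_carrier)
  fix x :: "complex vec" assume "x \<in> carrier_vec d"
  then show "0 \<le> Re ((partial_trace d m X *\<^sub>v x) \<bullet>c x)"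
    using assms partial_trace_quadratic_form[OF X] unfolding psd_mat_def
    by (simp add: Re_sum sum_nonneg)
qed

section \<open>Unitarily invariant sets of Hermitian matrices\<close>

lemma unitarily_invariant_eq_spectral_preimage:
  assumes P_hermitian: "\<And>A. P A \<Longrightarrow> hermitian_mat n A"
    and X: "X \<subseteq> Collect P"
    and invariant: "\<And>A W. A \<in> X \<Longrightarrow> unitary_mat n W \<Longrightarrow> mat_adjoint W * A * W \<in> X"
  shows "\<exists>D \<subseteq> eigvals_desc ` Collect P. X = {A. P A \<and> eigvals_desc A \<in> D}"
proof (intro exI conjI)
  show "eigvals_desc ` X \<subseteq> eigvals_desc ` Collect P"
    using X by blast
  show "X = {A. P A \<and> eigvals_desc A \<in> eigvals_desc ` X}"
  proof (intro equalityI subsetI)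
    fix A assume "A \<in> {A. P A \<and> eigvals_desc A \<in> eigvals_desc ` X}"
    then obtain B where A: "P A" and B: "B \<in> X" and eq: "eigvals_desc A = eigvals_desc B"
      by auto
    obtain W where "unitary_mat n W" "A = mat_adjoint W * B * W"
      using unitarily_congruent_if_eigvals_desc_eq[OF P_hermitian[OF A] P_hermitian eq] B X by blast
    then show "A \<in> X" using invariant[OF B] by simp
  qed (use X in auto)
qed

lemma eigvals_desc_hermitian_mat_image: "eigvals_desc ` Collect (hermitian_mat n) \<subseteq> {x. length x = n}"
  using eigvals_desc_hermitian_mat(1) by blast

lemma eigvals_desc_psd_mat_image:
  "eigvals_desc ` Collect (psd_mat n) \<subseteq> {x. length x = n \<and> (\<forall>t \<in> set x. 0 \<le> t)}"
proof (intro image_subsetI CollectI conjI ballI)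
  fix A t assume A: "A \<in> Collect (psd_mat n)"
  then show "length (eigvals_desc A) = n"
    using eigvals_desc_hermitian_mat(1) psd_mat_hermitian_mat by blast
  assume "t \<in> set (eigvals_desc A)"
  then show "0 \<le> t"
    using psd_mat_eigenvalue_nonneg[of n A] eigvals_desc_hermitian_mat(3) psd_mat_hermitian_mat A by force
qed

lemma partial_trace_congruence_image_invariant:
  assumes S: "S \<in> carrier_mat (d * m) (d * m)"
    and P_carrier: "\<And>V. P V \<Longrightarrow> V \<in> carrier_mat (d * m) (d * m)"
    and P_unitary: "\<And>V K. P V \<Longrightarrow> unitary_mat (d * m) K \<Longrightarrow> P (V * K)"
    and A: "A \<in> partial_trace d m ` {mat_adjoint V * S * V | V. P V}" and W: "unitary_mat d W"
  shows "mat_adjoint W * A * W \<in> partial_trace d m ` {mat_adjoint V * S * V | V. P V}"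
proof -
  obtain V where V: "P V" and A_eq: "A = partial_trace d m (mat_adjoint V * S * V)"
    using A by blast
  let ?K = "block_diag_mat d m W"
  have "mat_adjoint W * A * W = partial_trace d m (mat_adjoint ?K * (mat_adjoint V * S * V) * ?K)"
    unfolding A_eq
    by (rule partial_trace_block_diag_congruence[OF unitary_mat_carrier[OF W]
          congruence_mat_carrier[OF P_carrier[OF V] S], symmetric])
  also have "\<dots> = partial_trace d m (mat_adjoint (V * ?K) * S * (V * ?K))"
    using mat_adjoint_mult_congruence[OF S P_carrier[OF V] block_diag_mat_carrier] by simp
  finally show ?thesis
    using P_unitary[OF V unitary_mat_block_diag_mat[OF W]] by blast
qed

lemma partial_trace_unitary_orbit_invariant:
  assumes "hermitian_mat (d * m) S" "A \<in> partial_trace d m ` unitary_orbit (d * m) S" "unitary_mat d W"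
  shows "mat_adjoint W * A * W \<in> partial_trace d m ` unitary_orbit (d * m) S"
  using hermitian_mat_carrier[OF assms(1)] unitary_mat_carrier unitary_mat_mult assms(2,3)
  unfolding unitary_orbit_def by (rule partial_trace_congruence_image_invariant)

lemma partial_trace_contraction_orbit_invariant:
  assumes "psd_mat (d * m) S" "A \<in> partial_trace d m ` contraction_orbit (d * m) S" "unitary_mat d W"
  shows "mat_adjoint W * A * W \<in> partial_trace d m ` contraction_orbit (d * m) S"
  using hermitian_mat_carrier[OF psd_mat_hermitian_mat[OF assms(1)]] contraction_mat_carrier
    contraction_mat_mult_unitary assms(2,3)
  unfolding contraction_orbit_def by (rule partial_trace_congruence_image_invariant)

lemma partial_trace_unitary_orbit_hermitian:
  assumes S: "hermitian_mat (d * m) S"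
  shows "partial_trace d m ` unitary_orbit (d * m) S \<subseteq> Collect (hermitian_mat d)"
proof
  fix A assume "A \<in> partial_trace d m ` unitary_orbit (d * m) S"
  then obtain U where "unitary_mat (d * m) U" "A = partial_trace d m (mat_adjoint U * S * U)"
    unfolding unitary_orbit_def by blast
  then show "A \<in> Collect (hermitian_mat d)"
    by (simp add: hermitian_mat_partial_trace hermitian_mat_congruence[OF S] unitary_mat_carrier)
qed

lemma partial_trace_contraction_orbit_psd:
  assumes S: "psd_mat (d * m) S"
  shows "partial_trace d m ` contraction_orbit (d * m) S \<subseteq> Collect (psd_mat d)"
proof
  fix A assume "A \<in> partial_trace d m ` contraction_orbit (d * m) S"
  then obtain V where "contraction_mat (d * m) V" "A = partial_trace d m (mat_adjoint V * S * V)"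
    unfolding contraction_orbit_def by blast
  then show "A \<in> Collect (psd_mat d)"
    by (simp add: psd_mat_partial_trace psd_mat_congruence[OF S] contraction_mat_carrier)
qed

theorem theorem3p6:
  fixes d m :: nat
  assumes "0 < d" and "0 < m"
  shows "(\<forall>S. hermitian_mat (d * m) S \<longrightarrow>
            (\<exists>D :: real list set. D \<subseteq> {x. length x = d} \<and>
               partial_trace d m ` unitary_orbit (d * m) S =
                 {A. hermitian_mat d A \<and> eigvals_desc A \<in> D}))
       \<and> (\<forall>S. psd_mat (d * m) S \<longrightarrow>
            (\<exists>D :: real list set. D \<subseteq> {x. length x = d \<and> (\<forall>t \<in> set x. 0 \<le> t)} \<and>
               partial_trace d m ` contraction_orbit (d * m) S =
                 {A. psd_mat d A \<and> eigvals_desc A \<in> D}))"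
proof (intro conjI allI impI)
  fix S assume S: "hermitian_mat (d * m) S"
  obtain D where "D \<subseteq> eigvals_desc ` Collect (hermitian_mat d)"
    and "partial_trace d m ` unitary_orbit (d * m) S = {A. hermitian_mat d A \<and> eigvals_desc A \<in> D}"
    using unitarily_invariant_eq_spectral_preimage[OF _ partial_trace_unitary_orbit_hermitian[OF S]
        partial_trace_unitary_orbit_invariant[OF S]] by blast
  moreover from this(1) have "D \<subseteq> {x. length x = d}"
    using eigvals_desc_hermitian_mat_image by (rule subset_trans)
  ultimately show "\<exists>D. D \<subseteq> {x. length x = d} \<and>
      partial_trace d m ` unitary_orbit (d * m) S = {A. hermitian_mat d A \<and> eigvals_desc A \<in> D}"
    by blast
next
  fix S assume S: "psd_mat (d * m) S"
  obtain D where "D \<subseteq> eigvals_desc ` Collect (psd_mat d)"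
    and "partial_trace d m ` contraction_orbit (d * m) S = {A. psd_mat d A \<and> eigvals_desc A \<in> D}"
    using unitarily_invariant_eq_spectral_preimage[OF psd_mat_hermitian_mat
        partial_trace_contraction_orbit_psd[OF S] partial_trace_contraction_orbit_invariant[OF S]] by blast
  moreover from this(1) have "D \<subseteq> {x. length x = d \<and> (\<forall>t \<in> set x. 0 \<le> t)}"
    using eigvals_desc_psd_mat_image by (rule subset_trans)
  ultimately show "\<exists>D. D \<subseteq> {x. length x = d \<and> (\<forall>t \<in> set x. 0 \<le> t)} \<and>
      partial_trace d m ` contraction_orbit (d * m) S = {A. psd_mat d A \<and> eigvals_desc A \<in> D}"
    by blast
qed

end
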